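(* For any adversary $\mathsf{A}$ against the IND-CPA security of CNTR.PKE, there exist adversaries $\mathsf{B}$ and $\mathsf{C}$ (with the same running time as $\mathsf{A}$) such that $$\mathbf{Adv}^{\text{IND-CPA}}_{\text{CNTR.PKE}}(\mathsf{A})\le\mathbf{Adv}^{\text{NTRU}}_{\mathcal{R}_q,\Psi_1}(\mathsf{B})+\mathbf{Adv}^{\text{RLWR}}_{\mathcal{R},\Psi_2}(\mathsf{C}).$$
   Context: $n$ is a positive integer of the form $3^l2^e$ divisible by $8$; $\mathcal{R}=\mathbb{Z}[x]/(x^n-x^{n/2}+1)$, $\mathcal{R}_q=\mathcal{R}/q\mathcal{R}$, $\mathcal{R}_{q_2}=\mathcal{R}/q_2\mathcal{R}$; $q>q_2\ge2$ integers with $q_2$ even and $\gcd(q,2)=1$; $\Psi_1,\Psi_2$ distributions over $\mathcal{R}$. $\lfloor x\rceil$ is coefficient-wise rounding to nearest integer. Message space $\mathcal{M}=\{0,1\}^{n/2}$. $\mathrm{PolyEncode}(m)$: with $\mathbf{H}$ the $4\times8$ binary matrix with rows $(1,1,1,1,0,0,0,0)$, $(0,0,1,1,1,1,0,0)$, $(0,0,0,0,1,1,1,1)$, $(0,1,0,1,0,1,0,1)$, split $m$ into quadruples $\mathbf{k}_i=(m_{4i},\dots,m_{4i+3})$ and set coefficients $8i,\dots,8i+7$ to $\frac{q}{2}(\mathbf{k}_i\mathbf{H}\bmod2)$. CNTR.PKE: KeyGen: $f',g\leftarrow\Psi_1$, $f:=2f'+1$; restart if $f$ not invertible in $\mathcal{R}_q$;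 $h:=g/f\in\mathcal{R}_q$; $pk=h$, $sk=f$. Enc$(h,m)$: $r\leftarrow\Psi_2$; $\sigma:=hr$; $c:=\lfloor\frac{q_2}{q}(\sigma+\mathrm{PolyEncode}(m))\rceil\bmod q_2$. IND-CPA advantage: $\mathbf{Adv}^{\text{IND-CPA}}_{\text{PKE}}(\mathsf{A})=|\Pr[b'=b]-\frac12|$ in the experiment $(pk,sk)\leftarrow\mathrm{KeyGen}()$; $(m_0,m_1,s)\leftarrow\mathsf{A}(pk)$; $b\xleftarrow{\$}\{0,1\}$; $c^*\leftarrow\mathrm{Enc}(pk,m_b)$; $b'\leftarrow\mathsf{A}(s,c^* )$. NTRU advantage: $\mathbf{Adv}^{\text{NTRU}}_{\mathcal{R}_q,\Psi_1}(\mathsf{B})=|\Pr[\mathsf{B}(h)=1]-\Pr[\mathsf{B}(u)=1]|$, where $h=g/f$ is distributed as the public key above ($g\leftarrow\Psi_1$, $f=2f'+1$, $f'\leftarrow\Psi_1$, conditioned on invertibility) and $u$ is uniform in $\mathcal{R}_q$. RLWR advantage (with rounding modulus $q_2$): $\mathbf{Adv}^{\text{RLWR}}_{\mathcal{R},\Psi_2}(\mathsf{C})=|\Pr[\mathsf{C}(h,\lfloor\frac{q_2}{q}hr\rceil\bmod q_2)=1]-\Pr[\mathsf{C}(h,u)=1]|$, where $h$ is uniform in $\mathcal{R}_q$, $r\leftarrow\Psi_2$, and $u$ is uniform in $\mathcal{R}_{q_2}$. *)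

theory Defs
  imports "HOL-Probability.Probability" "HOL-Computational_Algebra.Polynomial"
begin

text \<open>Elements of R are represented by integer polynomials; elements of R_q by their
canonical representative: degree < n, coefficients in {0..q-1}.\<close>

definition cyc :: "nat \<Rightarrow> int poly" where
  "cyc n = monom 1 n - monom 1 (n div 2) + 1"

text \<open>Reduction R -> R_q (cyc n is monic, so pseudo_mod is the ordinary remainder).\<close>
definition redq :: "int \<Rightarrow> nat \<Rightarrow> int poly \<Rightarrow> int poly" where
  "redq q n p = Poly (map (\<lambda>i. coeff (pseudo_mod p (cyc n)) i mod q) [0..<n])"

definition Rq :: "int \<Rightarrow> nat \<Rightarrow> int poly set" where
  "Rq q n = {p. \<forall>i. coeff p i \<in> {0..<q} \<and> (n \<le> i \<longrightarrow> coeff p i = 0)}"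

definition mulq :: "int \<Rightarrow> nat \<Rightarrow> int poly \<Rightarrow> int poly \<Rightarrow> int poly" where
  "mulq q n a b = redq q n (a * b)"

definition invertible_q :: "int \<Rightarrow> nat \<Rightarrow> int poly \<Rightarrow> bool" where
  "invertible_q q n f \<longleftrightarrow> (\<exists>g\<in>Rq q n. mulq q n f g = 1)"

definition invq :: "int \<Rightarrow> nat \<Rightarrow> int poly \<Rightarrow> int poly" where
  "invq q n f = (SOME g. g \<in> Rq q n \<and> mulq q n f g = 1)"

definition msg_space :: "nat \<Rightarrow> bool list set" where
  "msg_space n = {m. length m = n div 2}"

definition Hmat :: "nat \<Rightarrow> nat \<Rightarrow> int" where
  "Hmat r t = (if r = 0 then (if t < 4 then 1 else 0)
    else if r = 1 then (if 2 \<le> t \<and> t < 6 then 1 else 0)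
    else if r = 2 then (if 4 \<le> t \<and> t < 8 then 1 else 0)
    else (if odd t then 1 else 0))"

text \<open>Bit at coefficient position j: entry (j mod 8) of k_(j div 8) H mod 2.\<close>
definition enc_bit :: "bool list \<Rightarrow> nat \<Rightarrow> int" where
  "enc_bit m j = (\<Sum>s<4. of_bool (m ! (4 * (j div 8) + s)) * Hmat s (j mod 8)) mod 2"

definition PolyEncode :: "int \<Rightarrow> bool list \<Rightarrow> nat \<Rightarrow> real" where
  "PolyEncode q m j = real_of_int q / 2 * real_of_int (enc_bit m j)"

text \<open>KeyGen: (f',g) <- Psi1 x Psi1, restarted until f = 2f'+1 is invertible in R_q,
i.e. the pair is drawn conditioned on invertibility. Returns (pk, sk).\<close>
definition keygen :: "nat \<Rightarrow> int \<Rightarrow> int poly pmf \<Rightarrow> (int poly \<times> int poly) pmf" where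
  "keygen n q \<Psi>1 =
     map_pmf (\<lambda>(f', g). let f = 2 * f' + 1 in (mulq q n g (invq q n f), f))
       (cond_pmf (pair_pmf \<Psi>1 \<Psi>1) {(f', g). invertible_q q n (2 * f' + 1)})"

definition enc_det :: "nat \<Rightarrow> int \<Rightarrow> int \<Rightarrow> int poly \<Rightarrow> bool list \<Rightarrow> int poly \<Rightarrow> int poly" where
  "enc_det n q q2 h m r =
     (let \<sigma> = mulq q n h r in
      Poly (map (\<lambda>j. round (real_of_int q2 / real_of_int q *
                 (real_of_int (coeff \<sigma> j) + PolyEncode q m j)) mod q2) [0..<n]))"

definition enc :: "nat \<Rightarrow> int \<Rightarrow> int \<Rightarrow> int poly pmf \<Rightarrow> int poly \<Rightarrow> bool list \<Rightarrow> int poly pmf" where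
  "enc n q q2 \<Psi>2 h m = map_pmf (enc_det n q q2 h m) \<Psi>2"

definition ind_cpa_game ::
  "nat \<Rightarrow> int \<Rightarrow> int \<Rightarrow> int poly pmf \<Rightarrow> int poly pmf \<Rightarrow>
   (int poly \<Rightarrow> (bool list \<times> bool list \<times> 's) pmf) \<Rightarrow> ('s \<Rightarrow> int poly \<Rightarrow> bool pmf) \<Rightarrow> bool pmf" where
  "ind_cpa_game n q q2 \<Psi>1 \<Psi>2 A1 A2 =
     bind_pmf (keygen n q \<Psi>1) (\<lambda>(pk, sk).
     bind_pmf (A1 pk) (\<lambda>(m0, m1, s).
     bind_pmf (bernoulli_pmf (1/2)) (\<lambda>b.
     bind_pmf (enc n q q2 \<Psi>2 pk (if b then m1 else m0)) (\<lambda>c.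
     bind_pmf (A2 s c) (\<lambda>b'. return_pmf (b' = b))))))"

definition adv_ind_cpa where
  "adv_ind_cpa n q q2 \<Psi>1 \<Psi>2 A1 A2 = \<bar>pmf (ind_cpa_game n q q2 \<Psi>1 \<Psi>2 A1 A2) True - 1/2\<bar>"

definition adv_ntru :: "nat \<Rightarrow> int \<Rightarrow> int poly pmf \<Rightarrow> (int poly \<Rightarrow> bool pmf) \<Rightarrow> real" where
  "adv_ntru n q \<Psi>1 B =
     \<bar>pmf (bind_pmf (keygen n q \<Psi>1) (\<lambda>(h, f). B h)) True
      - pmf (bind_pmf (pmf_of_set (Rq q n)) B) True\<bar>"

definition rlwr_round :: "nat \<Rightarrow> int \<Rightarrow> int \<Rightarrow> int poly \<Rightarrow> int poly" where
  "rlwr_round n q q2 \<sigma> =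
     Poly (map (\<lambda>j. round (real_of_int q2 / real_of_int q * real_of_int (coeff \<sigma> j)) mod q2) [0..<n])"

definition adv_rlwr ::
  "nat \<Rightarrow> int \<Rightarrow> int \<Rightarrow> int poly pmf \<Rightarrow> (int poly \<Rightarrow> int poly \<Rightarrow> bool pmf) \<Rightarrow> real" where
  "adv_rlwr n q q2 \<Psi>2 C =
     \<bar>pmf (bind_pmf (pmf_of_set (Rq q n)) (\<lambda>h. bind_pmf \<Psi>2 (\<lambda>r.
          C h (rlwr_round n q q2 (mulq q n h r))))) True
      - pmf (bind_pmf (pmf_of_set (Rq q n)) (\<lambda>h. bind_pmf (pmf_of_set (Rq q2 n)) (\<lambda>u. C h u))) True\<bar>"

section \<open>The reductions (each runs A once, plus sampling/encoding)\<close>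

definition red_B where
  "red_B n q q2 \<Psi>2 A1 A2 h =
     bind_pmf (A1 h) (\<lambda>(m0, m1, s).
     bind_pmf (bernoulli_pmf (1/2)) (\<lambda>b.
     bind_pmf (enc n q q2 \<Psi>2 h (if b then m1 else m0)) (\<lambda>c.
     bind_pmf (A2 s c) (\<lambda>b'. return_pmf (b' = b)))))"

definition add_encoding :: "nat \<Rightarrow> int \<Rightarrow> int poly \<Rightarrow> bool list \<Rightarrow> int poly" where
  "add_encoding n q2 c0 m = Poly (map (\<lambda>j. (coeff c0 j + q2 div 2 * enc_bit m j) mod q2) [0..<n])"

definition red_C where
  "red_C n q2 A1 A2 h c0 =
     bind_pmf (A1 h) (\<lambda>(m0, m1, s).
     bind_pmf (bernoulli_pmf (1/2)) (\<lambda>b.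
     bind_pmf (A2 s (add_encoding n q2 c0 (if b then m1 else m0))) (\<lambda>b'. return_pmf (b' = b))))"

end

theory Submission
  imports Defs
begin

text \<open>A two-step hybrid argument. First the public key is replaced by a uniform element of
R_q; the rest of the IND-CPA game is exactly the NTRU distinguisher B, so this costs
Adv^NTRU(B). Since q2 is even, (q2/q) * (q/2) * bit = (q2/2) * bit is an integer and can be
pulled out of the rounding: the ciphertext is the RLWR sample round(q2/q * h r) shifted by
q2/2 times the encoded bits. The game with uniform key is therefore C run on an RLWR sample,
and replacing that sample by a uniform u costs Adv^RLWR(C). Finally, shifting a uniform u by
a fixed vector is a bijection of R_q2, so the challenge is independent of b and A wins with
probability exactly 1/2.\<close>

lemma round_add_of_int: "round (x + real_of_int k) = round x + k"
  unfolding round_def by (metis add.commute add.left_commute floor_add_int)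

lemma map_pmf_of_set_involution:
  assumes "finite A" "A \<noteq> {}" "f ` A \<subseteq> A" "\<And>x. x \<in> A \<Longrightarrow> f (f x) = x"
  shows "map_pmf f (pmf_of_set A) = pmf_of_set A"
proof -
  have "bij_betw f A A"
    using assms(3,4) by (intro bij_betw_byWitness[where f' = f]) auto
  then show ?thesis using assms(1,2) by (intro map_pmf_of_set_bij_betw)
qed

lemma bernoulli_half_guess:
  "bernoulli_pmf (1/2) \<bind> (\<lambda>b. D \<bind> (\<lambda>b'. return_pmf (b' = b))) = bernoulli_pmf (1/2)"
proof -
  have "bernoulli_pmf (1/2) \<bind> (\<lambda>b. D \<bind> (\<lambda>b'. return_pmf (b' = b)))
      = D \<bind> (\<lambda>b'. bernoulli_pmf (1/2) \<bind> (\<lambda>b. return_pmf (b' = b)))"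
    by (rule bind_commute_pmf)
  also have "\<dots> = D \<bind> (\<lambda>b'. bernoulli_pmf (1/2))"
  proof (rule bind_pmf_cong[OF refl])
    fix b'
    show "bernoulli_pmf (1/2) \<bind> (\<lambda>b. return_pmf (b' = b)) = bernoulli_pmf (1/2)"
      by (cases b') (auto intro!: pmf_eqI simp: pmf_bind measure_pmf_single split: split_indicator)
  qed
  finally show ?thesis by simp
qed

lemma bernoulli_half_guess_blind:
  assumes "\<And>b. map_pmf (c b) U = U"
  shows "U \<bind> (\<lambda>u. bernoulli_pmf (1/2) \<bind> (\<lambda>b. A (c b u) \<bind> (\<lambda>b'. return_pmf (b' = b))))
           = bernoulli_pmf (1/2)"
proof -
  have "U \<bind> (\<lambda>u. bernoulli_pmf (1/2) \<bind> (\<lambda>b. A (c b u) \<bind> (\<lambda>b'. return_pmf (b' = b))))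
      = bernoulli_pmf (1/2) \<bind> (\<lambda>b. U \<bind> (\<lambda>u. A (c b u) \<bind> (\<lambda>b'. return_pmf (b' = b))))"
    by (rule bind_commute_pmf)
  also have "\<dots> = bernoulli_pmf (1/2) \<bind> (\<lambda>b. (map_pmf (c b) U \<bind> A) \<bind> (\<lambda>b'. return_pmf (b' = b)))"
    by (simp add: bind_map_pmf bind_assoc_pmf)
  also have "\<dots> = bernoulli_pmf (1/2)"
    unfolding assms by (rule bernoulli_half_guess)
  finally show ?thesis .
qed

lemma finite_Rq: "finite (Rq q n)"
proof -
  have "Rq q n \<subseteq> Poly ` {xs. set xs \<subseteq> {0..<q} \<and> length xs = n}"
  proof
    fix p assume p: "p \<in> Rq q n"
    have "p = Poly (map (coeff p) [0..<n])"
      using p unfolding Rq_def by (intro poly_eqI) (auto simp: nth_default_def)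
    moreover have "set (map (coeff p) [0..<n]) \<subseteq> {0..<q}"
      using p unfolding Rq_def by auto
    ultimately show "p \<in> Poly ` {xs. set xs \<subseteq> {0..<q} \<and> length xs = n}" by force
  qed
  then show ?thesis
    by (rule finite_subset) (intro finite_imageI finite_lists_length_eq, simp)
qed

lemma zero_in_Rq: "q > 0 \<Longrightarrow> 0 \<in> Rq q n"
  unfolding Rq_def by auto

lemma add_encoding_in_Rq: "q2 > 0 \<Longrightarrow> add_encoding n q2 u m \<in> Rq q2 n"
  unfolding add_encoding_def Rq_def by (auto simp: nth_default_def)

lemma add_encoding_add_encoding:
  assumes "even q2" "u \<in> Rq q2 n"
  shows "add_encoding n q2 (add_encoding n q2 u m) m = u"
proof (rule poly_eqI)
  fix j
  show "coeff (add_encoding n q2 (add_encoding n q2 u m) m) j = coeff u j"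
  proof (cases "j < n")
    case True
    define t where "t = q2 div 2 * enc_bit m j"
    have "((coeff u j + t) mod q2 + t) mod q2 = (coeff u j + (t + t)) mod q2"
      by (simp add: mod_add_left_eq add.assoc)
    also have "t + t = q2 * enc_bit m j"
      using assms(1) unfolding t_def by (auto elim!: evenE)
    also have "(coeff u j + q2 * enc_bit m j) mod q2 = coeff u j"
      using assms(2) unfolding Rq_def by simp
    finally show ?thesis
      using True unfolding add_encoding_def t_def by (simp add: nth_default_def)
  next
    case False
    then show ?thesis using assms(2) unfolding add_encoding_def Rq_def by (simp add: nth_default_def)
  qed
qed

lemma map_add_encoding_uniform:
  assumes "q2 > 0" "even q2"
  shows "map_pmf (\<lambda>u. add_encoding n q2 u m) (pmf_of_set (Rq q2 n)) = pmf_of_set (Rq q2 n)"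
  using assms zero_in_Rq[of q2 n]
  by (intro map_pmf_of_set_involution finite_Rq) (auto simp: add_encoding_in_Rq add_encoding_add_encoding)

lemma enc_det_eq_add_encoding:
  assumes "q \<noteq> 0" "even q2"
  shows "enc_det n q q2 h m r = add_encoding n q2 (rlwr_round n q q2 (mulq q n h r)) m"
proof -
  have "round (q2 / q * (coeff (\<sigma> :: int poly) j + PolyEncode q m j)) mod q2
      = (round (q2 / q * coeff \<sigma> j) mod q2 + q2 div 2 * enc_bit m j) mod q2" for \<sigma> j
  proof -
    have shift: "q2 / q * (coeff \<sigma> j + PolyEncode q m j)
        = q2 / q * coeff \<sigma> j + of_int (q2 div 2 * enc_bit m j)"
      using assms unfolding PolyEncode_def by (auto simp: field_simps real_of_int_div elim!: evenE)
    show ?thesis unfolding shift round_add_of_int by (simp add: mod_add_left_eq)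
  qed
  then show ?thesis
    unfolding enc_det_def add_encoding_def rlwr_round_def Let_def
    by (intro arg_cong[where f = Poly] map_cong) (auto simp: nth_default_def)
qed

lemma ind_cpa_game_eq_red_B:
  "ind_cpa_game n q q2 \<Psi>1 \<Psi>2 A1 A2 = keygen n q \<Psi>1 \<bind> (\<lambda>(h, f). red_B n q q2 \<Psi>2 A1 A2 h)"
  unfolding ind_cpa_game_def red_B_def by (simp add: case_prod_beta)

lemma red_B_eq_red_C_rlwr:
  assumes "q \<noteq> 0" "even q2"
  shows "red_B n q q2 \<Psi>2 A1 A2 h
           = \<Psi>2 \<bind> (\<lambda>r. red_C n q2 A1 A2 h (rlwr_round n q q2 (mulq q n h r)))"
  unfolding red_B_def red_C_def enc_def
  by (subst bind_commute_pmf)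
    (auto intro!: bind_pmf_cong split: prod.split
      simp: bind_commute_pmf[of \<Psi>2] bind_map_pmf enc_det_eq_add_encoding[OF assms])

lemma red_C_uniform:
  assumes "q2 > 0" "even q2"
  shows "pmf_of_set (Rq q2 n) \<bind> red_C n q2 A1 A2 h = bernoulli_pmf (1/2)"
proof -
  have "pmf_of_set (Rq q2 n) \<bind> red_C n q2 A1 A2 h = A1 h \<bind> (\<lambda>_. bernoulli_pmf (1/2))"
    unfolding red_C_def
  proof (subst bind_commute_pmf, rule bind_pmf_cong[OF refl], clarify)
    fix m0 m1 s
    show "pmf_of_set (Rq q2 n) \<bind> (\<lambda>u. bernoulli_pmf (1/2) \<bind> (\<lambda>b.
        A2 s (add_encoding n q2 u (if b then m1 else m0)) \<bind> (\<lambda>b'. return_pmf (b' = b))))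
        = bernoulli_pmf (1/2)"
      by (rule bernoulli_half_guess_blind[where c = "\<lambda>b u. add_encoding n q2 u (if b then m1 else m0)"])
        (rule map_add_encoding_uniform[OF assms])
  qed
  then show ?thesis by simp
qed

text \<open>Only q \<noteq> 0 and q2 > 0 even are used: the shape of n, the oddness of q, the
invertibility of some key candidate and the message lengths matter for correctness and
well-definedness of the scheme, not for this reduction.\<close>

theorem theorem5:
  fixes n l e :: nat and q q2 :: int
    and \<Psi>1 \<Psi>2 :: "int poly pmf"
    and A1 :: "int poly \<Rightarrow> (bool list \<times> bool list \<times> 's) pmf"
    and A2 :: "'s \<Rightarrow> int poly \<Rightarrow> bool pmf"
  assumes "n = 3 ^ l * 2 ^ e" and "8 dvd n"
    and "q > q2" and "q2 \<ge> 2" and "even q2" and "gcd q 2 = 1"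
    and "\<exists>x\<in>set_pmf (pair_pmf \<Psi>1 \<Psi>1). invertible_q q n (2 * fst x + 1)"
    and "\<And>pk m0 m1 s. (m0, m1, s) \<in> set_pmf (A1 pk) \<Longrightarrow>
           m0 \<in> msg_space n \<and> m1 \<in> msg_space n"
  shows "adv_ind_cpa n q q2 \<Psi>1 \<Psi>2 A1 A2
           \<le> adv_ntru n q \<Psi>1 (red_B n q q2 \<Psi>2 A1 A2)
             + adv_rlwr n q q2 \<Psi>2 (red_C n q2 A1 A2)"
proof -
  have "q \<noteq> 0" "q2 > 0" using assms(3,4) by auto
  have hybrid: "pmf_of_set (Rq q n) \<bind> red_B n q q2 \<Psi>2 A1 A2
      = pmf_of_set (Rq q n) \<bind> (\<lambda>h. \<Psi>2 \<bind> (\<lambda>r.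
          red_C n q2 A1 A2 h (rlwr_round n q q2 (mulq q n h r))))"
    by (rule bind_pmf_cong[OF refl]) (rule red_B_eq_red_C_rlwr[OF \<open>q \<noteq> 0\<close> \<open>even q2\<close>])
  have ideal: "pmf_of_set (Rq q n) \<bind> (\<lambda>h. pmf_of_set (Rq q2 n) \<bind> red_C n q2 A1 A2 h)
      = bernoulli_pmf (1/2)"
    by (simp add: red_C_uniform[OF \<open>q2 > 0\<close> \<open>even q2\<close>])
  show ?thesis
    unfolding adv_ind_cpa_def adv_ntru_def adv_rlwr_def ind_cpa_game_eq_red_B hybrid ideal
    by simp
qed

end
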